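(* Let $(Q(M))_{M\in\mathcal N}$ be a family of matrices satisfying (A1)–(A3), and let $p$ be a stochastic choice function such that $p(\cdot,\{i,j\})\bigl(I-Q(\{i,j\})\bigr)=0$ for all distinct $i,j\in X$. Fix $M\in\mathcal N$ and let $G(M)=\{(i,j)\in M\times M:\delta_{ij}(M)>0\}$ (for $(i,j)\in G(M)$ necessarily $p(j,\{i,j\})>0$). Let $D(M)$ be the $|M|\times|G(M)|$ matrix with rows indexed by $m\in M$ and columns by $(i,j)\in G(M)$, with entries $D_{m,(i,j)}=\delta_{ij}(M)/p(j,\{i,j\})$ if $m=i$, $D_{m,(i,j)}=-\delta_{ij}(M)/p(j,\{i,j\})$ if $m=j$, and $0$ otherwise, and let $\gamma(M)$ be the column vector with entries $\gamma_{(i,j)}(M)=q_{ij}(M)$, $(i,j)\in G(M)$. Then $p(\cdot,M)(I-Q(M))=0$ if and only if $D(M)\gamma(M)=0$, i.e. if and only if for every $j\in M$ $$\sum_{i:(j,i)\in G(M)}\frac{\delta_{ji}(M)\,q_{ji}(M)}{p(i,\{i,j\})}-\sum_{i:(i,j)\in G(M)}\frac{\delta_{ij}(M)\,q_{ij}(M)}{p(j,\{i,j\})}=0.$$ (If $G(M)=\emptyset$ the condition is vacuous and $p(\cdot,M)(I-Q(M))=0$ holds.)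
   Context: $X$ is a finite set of alternatives; a menu is a nonempty subset of $X$, and $\mathcal N$ denotes the set of all menus. A stochastic choice function is a map $p:X\times\mathcal N\to[0,1]$ with $\sum_{i\in M}p(i,M)=1$ and $p(i,M)=0$ for $i\notin M$; $p(\cdot,M)$ denotes the row vector $(p(i,M))_{i\in M}$. For $M\in\mathcal N$ and $i,j\in M$ let $\delta_{ij}(M)=p(i,M)\,p(j,\{i,j\})-p(i,\{i,j\})\,p(j,M)$. The family $Q(M)=(q_{ij}(M))_{i,j\in M}$, $M\in\mathcal N$, has nonnegative entries and satisfies for all $M\in\mathcal N$ and distinct $i,j\in M$: (A1) $q_{ii}(M)=1-\sum_{k\neq i}q_{ik}(M)>0$; (A2) if $q_{ij}(\{i,j\})=0$ then $q_{ji}(\{i,j\})>0$; (A3) $q_{ij}(\{i,j\})\,q_{ji}(M)=q_{ji}(\{i,j\})\,q_{ij}(M)$. *)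

theory Defs
  imports Complex_Main
begin

text \<open>The matrix family is
  Q :: 'a set => 'a => 'a => real, with Q M i j = q_ij(M).\<close>

definition menu :: "'a set \<Rightarrow> 'a set \<Rightarrow> bool" where
  "menu X M \<longleftrightarrow> M \<noteq> {} \<and> M \<subseteq> X"

definition stochastic_choice :: "'a set \<Rightarrow> ('a \<Rightarrow> 'a set \<Rightarrow> real) \<Rightarrow> bool" where
  "stochastic_choice X p \<longleftrightarrow>
     (\<forall>M. menu X M \<longrightarrow>
        (\<forall>i. 0 \<le> p i M \<and> p i M \<le> 1) \<and>
        (\<Sum>i\<in>M. p i M) = 1 \<and>
        (\<forall>i. i \<notin> M \<longrightarrow> p i M = 0))"

text \<open>Assumptions (A1)-(A3) on the family Q, together with nonnegativity of entries.\<close>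
definition Q_family :: "'a set \<Rightarrow> ('a set \<Rightarrow> 'a \<Rightarrow> 'a \<Rightarrow> real) \<Rightarrow> bool" where
  "Q_family X Q \<longleftrightarrow>
     (\<forall>M. menu X M \<longrightarrow>
        (\<forall>i\<in>M. \<forall>j\<in>M. 0 \<le> Q M i j) \<and>
        (\<forall>i\<in>M. Q M i i = 1 - (\<Sum>k\<in>M - {i}. Q M i k) \<and> Q M i i > 0) \<and>
        (\<forall>i\<in>M. \<forall>j\<in>M. i \<noteq> j \<longrightarrow>
            (Q {i,j} i j = 0 \<longrightarrow> Q {i,j} j i > 0) \<and>
            Q {i,j} i j * Q M j i = Q {i,j} j i * Q M i j))"

definition stationary :: "('a \<Rightarrow> 'a set \<Rightarrow> real) \<Rightarrow> ('a set \<Rightarrow> 'a \<Rightarrow> 'a \<Rightarrow> real) \<Rightarrow> 'a set \<Rightarrow> bool" where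
  "stationary p Q M \<longleftrightarrow>
     (\<forall>k\<in>M. (\<Sum>m\<in>M. p m M * ((if m = k then 1 else 0) - Q M m k)) = 0)"

definition delta :: "('a \<Rightarrow> 'a set \<Rightarrow> real) \<Rightarrow> 'a set \<Rightarrow> 'a \<Rightarrow> 'a \<Rightarrow> real" where
  "delta p M i j = p i M * p j {i,j} - p i {i,j} * p j M"

definition Gset :: "('a \<Rightarrow> 'a set \<Rightarrow> real) \<Rightarrow> 'a set \<Rightarrow> ('a \<times> 'a) set" where
  "Gset p M = {(i,j) \<in> M \<times> M. delta p M i j > 0}"

definition Dmat :: "('a \<Rightarrow> 'a set \<Rightarrow> real) \<Rightarrow> 'a set \<Rightarrow> 'a \<Rightarrow> 'a \<times> 'a \<Rightarrow> real" where
  "Dmat p M m g = (case g of (i,j) \<Rightarrow>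
      if m = i then delta p M i j / p j {i,j}
      else if m = j then - (delta p M i j / p j {i,j})
      else 0)"

definition gamma :: "('a set \<Rightarrow> 'a \<Rightarrow> 'a \<Rightarrow> real) \<Rightarrow> 'a set \<Rightarrow> 'a \<times> 'a \<Rightarrow> real" where
  "gamma Q M g = (case g of (i,j) \<Rightarrow> Q M i j)"

end

theory Submission
  imports Defs
begin

text \<open>Since the rows of Q(M) sum to one, the k-th entry of p(.,M)(I - Q(M)) is the total net
  flow out of k, the sum over j of p_k q_kj - p_j q_jk. On a binary menu stationarity is detailed
  balance, p(i,{i,j}) q_ij({i,j}) = p(j,{i,j}) q_ji({i,j}), and combining it with (A3) shows that
  the net flow from i to j is delta_ij(M) q_ij(M) / p(j,{i,j}) when delta_ij(M) > 0, its negative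
  counterpart when delta_ji(M) > 0, and zero otherwise. Summing over j gives the k-th entry of
  D(M) gamma(M).\<close>

definition flow ::
    "('a \<Rightarrow> 'a set \<Rightarrow> real) \<Rightarrow> ('a set \<Rightarrow> 'a \<Rightarrow> 'a \<Rightarrow> real) \<Rightarrow> 'a set \<Rightarrow> 'a \<Rightarrow> 'a \<Rightarrow> real"
  where "flow p Q M i j = p i M * Q M i j - p j M * Q M j i"

text \<open>The product D_{i,(i,j)}(M) gamma_{(i,j)}(M), extended by zero outside G(M).\<close>

definition edge_weight ::
    "('a \<Rightarrow> 'a set \<Rightarrow> real) \<Rightarrow> ('a set \<Rightarrow> 'a \<Rightarrow> 'a \<Rightarrow> real) \<Rightarrow> 'a set \<Rightarrow> 'a \<Rightarrow> 'a \<Rightarrow> real"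
  where "edge_weight p Q M i j =
    (if (i,j) \<in> Gset p M then delta p M i j * Q M i j / p j {i,j} else 0)"

lemma flow_swap: "flow p Q M j i = - flow p Q M i j"
  by (simp add: flow_def)

lemma delta_self: "delta p M i i = 0"
  by (simp add: delta_def)

lemma delta_swap: "delta p M j i = - delta p M i j"
  by (simp add: delta_def insert_commute)

lemma delta_pos_imp_pair_prob_pos:
  assumes "0 \<le> p i M" "0 \<le> p i {i,j}" "0 \<le> p j M" "delta p M i j > 0"
  shows "p j {i,j} > 0"
proof (rule ccontr)
  assume "\<not> p j {i,j} > 0"
  then have "p i M * p j {i,j} \<le> 0" using assms(1) by (simp add: mult_nonneg_nonpos)
  moreover have "0 \<le> p i {i,j} * p j M" using assms(2,3) by simp
  ultimately show False using assms(4) by (simp add: delta_def)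
qed

lemma stationary_pair_imp_detailed_balance:
  assumes "i \<noteq> j" "Q {i,j} i i = 1 - Q {i,j} i j" "stationary p Q {i,j}"
  shows "p i {i,j} * Q {i,j} i j = p j {i,j} * Q {i,j} j i"
proof -
  have "(\<Sum>m\<in>{i,j}. p m {i,j} * ((if m = i then 1 else 0) - Q {i,j} m i)) = 0"
    using assms(3) unfolding stationary_def by blast
  then show ?thesis using assms(1,2) by (simp add: algebra_simps)
qed

lemma stationary_iff_flow_sums:
  assumes "finite M" and rows: "\<And>k. k \<in> M \<Longrightarrow> Q M k k = 1 - (\<Sum>j\<in>M - {k}. Q M k j)"
  shows "stationary p Q M \<longleftrightarrow> (\<forall>k\<in>M. (\<Sum>j\<in>M. flow p Q M k j) = 0)"
proof -
  have "(\<Sum>m\<in>M. p m M * ((if m = k then 1 else 0) - Q M m k)) = (\<Sum>j\<in>M. flow p Q M k j)"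
    if k: "k \<in> M" for k
  proof -
    have row_sum: "(\<Sum>j\<in>M. Q M k j) = 1"
      using rows[OF k] assms(1) k by (simp add: sum.remove)
    have "(\<Sum>m\<in>M. p m M * ((if m = k then 1 else 0) - Q M m k))
        = p k M - (\<Sum>m\<in>M. p m M * Q M m k)"
    proof -
      have "p m M * ((if m = k then 1 else 0) - Q M m k)
          = (if m = k then p m M else 0) - p m M * Q M m k" for m by (simp add: right_diff_distrib)
      then show ?thesis using assms(1) k by (simp add: sum_subtractf)
    qed
    also have "\<dots> = p k M * (\<Sum>j\<in>M. Q M k j) - (\<Sum>m\<in>M. p m M * Q M m k)"
      using row_sum by simp
    also have "\<dots> = (\<Sum>j\<in>M. flow p Q M k j)"
      by (simp add: flow_def sum_subtractf sum_distrib_left)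
    finally show ?thesis .
  qed
  then show ?thesis unfolding stationary_def by simp
qed

text \<open>Positivity of p(j,{i,j}) forces q_ij({i,j}) > 0 through (A2) and detailed balance,
  so (A3) can be divided by it.\<close>

lemma flow_eq_delta_quotient:
  assumes balance: "p i {i,j} * Q {i,j} i j = p j {i,j} * Q {i,j} j i"
    and A2: "Q {i,j} i j = 0 \<Longrightarrow> Q {i,j} j i > 0"
    and A3: "Q {i,j} i j * Q M j i = Q {i,j} j i * Q M i j"
    and nonneg: "Q {i,j} i j \<ge> 0" and pos: "p j {i,j} > 0"
  shows "flow p Q M i j = delta p M i j * Q M i j / p j {i,j}"
proof -
  have q_pos: "Q {i,j} i j > 0"
    using nonneg A2 balance pos by (cases "Q {i,j} i j = 0") auto
  have "Q {i,j} i j * (p j {i,j} * Q M j i) = p j {i,j} * (Q {i,j} i j * Q M j i)"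
    by simp
  also have "\<dots> = p j {i,j} * Q {i,j} j i * Q M i j" using A3 by simp
  also have "\<dots> = Q {i,j} i j * (p i {i,j} * Q M i j)" using balance by (simp add: ac_simps)
  finally have "p j {i,j} * Q M j i = p i {i,j} * Q M i j"
    using q_pos by simp
  then show ?thesis
    using pos unfolding flow_def delta_def by (simp add: field_simps)
qed

lemma flow_eq_zero_if_pair_prob_zero:
  assumes balance: "p i {i,j} * Q {i,j} i j = p j {i,j} * Q {i,j} j i"
    and A2: "Q {i,j} i j = 0 \<Longrightarrow> Q {i,j} j i > 0"
    and A3: "Q {i,j} i j * Q M j i = Q {i,j} j i * Q M i j"
    and pair_sum: "p i {i,j} + p j {i,j} = 1"
    and zero: "p j {i,j} = 0" and no_gap: "delta p M i j = 0"
  shows "flow p Q M i j = 0"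
proof -
  have "p j M = 0" using no_gap pair_sum zero by (simp add: delta_def)
  moreover have "Q {i,j} i j = 0" using balance pair_sum zero by simp
  then have "Q M i j = 0" using A2 A3 by simp
  ultimately show ?thesis by (simp add: flow_def)
qed

lemma edge_weight_sum_eq_Dmat_gamma:
  assumes "finite M" "m \<in> M"
  shows "(\<Sum>g\<in>Gset p M. Dmat p M m g * gamma Q M g)
       = (\<Sum>j\<in>M. edge_weight p Q M m j) - (\<Sum>i\<in>M. edge_weight p Q M i m)"
proof -
  have G_sub: "Gset p M \<subseteq> M \<times> M" by (auto simp: Gset_def)
  have Dg: "Dmat p M m (i,j) * gamma Q M (i,j)
        = (if i = m then edge_weight p Q M i j else 0)
        - (if j = m then edge_weight p Q M i j else 0)"
    if "(i,j) \<in> Gset p M" for i j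
    using that by (auto simp: Dmat_def gamma_def edge_weight_def Gset_def delta_self)
  have "(\<Sum>g\<in>Gset p M. Dmat p M m g * gamma Q M g)
      = (\<Sum>(i,j)\<in>M \<times> M. (if i = m then edge_weight p Q M i j else 0)
                        - (if j = m then edge_weight p Q M i j else 0))"
    using assms(1) G_sub
    by (intro sum.mono_neutral_cong_left) (auto simp: Dg edge_weight_def)
  also have "\<dots> = (\<Sum>i\<in>M. \<Sum>j\<in>M. (if i = m then edge_weight p Q M i j else 0)
                                - (if j = m then edge_weight p Q M i j else 0))"
    by (simp only: sum.cartesian_product)
  also have "\<dots> = (\<Sum>i\<in>M. if i = m then \<Sum>j\<in>M. edge_weight p Q M i j else 0)
                - (\<Sum>i\<in>M. \<Sum>j\<in>M. if j = m then edge_weight p Q M i j else 0)"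
    by (simp add: sum_subtractf) (rule sum.cong; simp)
  also have "\<dots> = (\<Sum>j\<in>M. edge_weight p Q M m j) - (\<Sum>i\<in>M. edge_weight p Q M i m)"
    using assms by simp
  finally show ?thesis .
qed

lemma edge_weight_sums_eq_G_sums:
  assumes "finite M" "j \<in> M"
  shows "(\<Sum>i\<in>{i. (j,i) \<in> Gset p M}. delta p M j i * Q M j i / p i {i,j})
       = (\<Sum>i\<in>M. edge_weight p Q M j i)"
    and "(\<Sum>i\<in>{i. (i,j) \<in> Gset p M}. delta p M i j * Q M i j / p j {i,j})
       = (\<Sum>i\<in>M. edge_weight p Q M i j)"
proof -
  have "{i. (j,i) \<in> Gset p M} = {i\<in>M. (j,i) \<in> Gset p M}"
       "{i. (i,j) \<in> Gset p M} = {i\<in>M. (i,j) \<in> Gset p M}"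
    by (auto simp: Gset_def)
  then have "(\<Sum>i\<in>{i. (i,j) \<in> Gset p M}. delta p M i j * Q M i j / p j {i,j})
      = (\<Sum>i\<in>M. edge_weight p Q M i j)"
    and "(\<Sum>i\<in>{i. (j,i) \<in> Gset p M}. delta p M j i * Q M j i / p i {i,j})
      = (\<Sum>i\<in>M. if (j,i) \<in> Gset p M then delta p M j i * Q M j i / p i {i,j} else 0)"
    using assms(1) by (simp_all add: sum.inter_filter edge_weight_def)
  moreover have "\<dots> = (\<Sum>i\<in>M. edge_weight p Q M j i)"
    by (rule sum.cong[OF refl]) (simp add: edge_weight_def insert_commute)
  ultimately show "(\<Sum>i\<in>{i. (j,i) \<in> Gset p M}. delta p M j i * Q M j i / p i {i,j})
      = (\<Sum>i\<in>M. edge_weight p Q M j i)"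
    and "(\<Sum>i\<in>{i. (i,j) \<in> Gset p M}. delta p M i j * Q M i j / p j {i,j})
      = (\<Sum>i\<in>M. edge_weight p Q M i j)"
    by simp_all
qed

context
  fixes X :: "'a set" and p :: "'a \<Rightarrow> 'a set \<Rightarrow> real" and Q :: "'a set \<Rightarrow> 'a \<Rightarrow> 'a \<Rightarrow> real"
  assumes QF: "Q_family X Q" and SC: "stochastic_choice X p"
    and pair_stationary: "\<And>i j. i \<in> X \<Longrightarrow> j \<in> X \<Longrightarrow> i \<noteq> j \<Longrightarrow> stationary p Q {i,j}"
begin

lemma Q_rows:
  assumes "menu X M" "k \<in> M"
  shows "Q M k k = 1 - (\<Sum>j\<in>M - {k}. Q M k j)"
  using QF assms unfolding Q_family_def by blast

lemma pair_facts:
  assumes M: "menu X M" and i: "i \<in> M" and j: "j \<in> M" and ij: "i \<noteq> j"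
  shows "p i {i,j} * Q {i,j} i j = p j {i,j} * Q {i,j} j i"
    and "Q {i,j} i j = 0 \<Longrightarrow> Q {i,j} j i > 0"
    and "Q {i,j} i j * Q M j i = Q {i,j} j i * Q M i j"
    and "Q {i,j} i j \<ge> 0"
    and "p i {i,j} + p j {i,j} = 1"
    and "p i M \<ge> 0" "p i {i,j} \<ge> 0" "p j M \<ge> 0"
proof -
  have "M \<subseteq> X" using M by (simp add: menu_def)
  then have ij_X: "i \<in> X" "j \<in> X" and pair: "menu X {i,j}"
    using i j by (auto simp: menu_def)
  have "Q {i,j} i i = 1 - Q {i,j} i j"
    using Q_rows[OF pair] ij by (simp add: insert_Diff_if)
  then show "p i {i,j} * Q {i,j} i j = p j {i,j} * Q {i,j} j i"
    using stationary_pair_imp_detailed_balance[OF ij] pair_stationary[OF ij_X ij] by simp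
  have "(Q {i,j} i j = 0 \<longrightarrow> Q {i,j} j i > 0)
      \<and> Q {i,j} i j * Q M j i = Q {i,j} j i * Q M i j"
    using QF M i j ij unfolding Q_family_def by blast
  then show "Q {i,j} i j = 0 \<Longrightarrow> Q {i,j} j i > 0"
    and "Q {i,j} i j * Q M j i = Q {i,j} j i * Q M i j"
    by auto
  have "\<forall>a\<in>{i,j}. \<forall>b\<in>{i,j}. 0 \<le> Q {i,j} a b"
    using QF pair unfolding Q_family_def by blast
  then show "Q {i,j} i j \<ge> 0" by simp
  have "(\<Sum>k\<in>{i,j}. p k {i,j}) = 1" "\<forall>k. 0 \<le> p k {i,j}" "\<forall>k. 0 \<le> p k M"
    using SC pair M unfolding stochastic_choice_def by blast+
  then show "p i {i,j} + p j {i,j} = 1" "p i M \<ge> 0" "p i {i,j} \<ge> 0" "p j M \<ge> 0"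
    using ij by auto
qed

lemma flow_eq_edge_weights:
  assumes M: "menu X M" and i: "i \<in> M" and j: "j \<in> M"
  shows "flow p Q M i j = edge_weight p Q M i j - edge_weight p Q M j i"
proof (cases "i = j")
  case True
  then show ?thesis by (simp add: flow_def)
next
  case False
  note F = pair_facts[OF M i j False] and F' = pair_facts[OF M j i False[symmetric]]
  have swap: "delta p M j i = - delta p M i j" by (rule delta_swap)
  consider "delta p M i j > 0" | "delta p M j i > 0" | "delta p M i j = 0"
    using swap by linarith
  then show ?thesis
  proof cases
    case 1
    then have "p j {i,j} > 0" by (rule delta_pos_imp_pair_prob_pos[of p i M j, OF F(6-8)])
    moreover have "edge_weight p Q M j i = 0"
      using 1 swap by (simp add: edge_weight_def Gset_def)
    ultimately show ?thesis
      using 1 i j flow_eq_delta_quotient[of p i j Q M, OF F(1-4)]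
      by (simp add: edge_weight_def Gset_def)
  next
    case 2
    then have "p i {j,i} > 0" by (rule delta_pos_imp_pair_prob_pos[of p j M i, OF F'(6-8)])
    then have "flow p Q M j i = edge_weight p Q M j i"
      using 2 i j flow_eq_delta_quotient[of p j i Q M, OF F'(1-4)]
      by (simp add: edge_weight_def Gset_def)
    moreover have "edge_weight p Q M i j = 0"
      using 2 swap by (simp add: edge_weight_def Gset_def)
    ultimately show ?thesis using flow_swap[of p Q M i j] by simp
  next
    case 3
    have "flow p Q M i j = 0"
    proof (cases "p j {i,j} > 0")
      case True
      then show ?thesis using 3 flow_eq_delta_quotient[of p i j Q M, OF F(1-4)] by simp
    next
      case False
      then have "p j {i,j} = 0" using F'(7) by (simp add: insert_commute)
      then show ?thesis
        using 3 flow_eq_zero_if_pair_prob_zero[of p i j Q M, OF F(1-3) F(5)] by simp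
    qed
    moreover have "edge_weight p Q M i j = 0" "edge_weight p Q M j i = 0"
      using 3 swap by (simp_all add: edge_weight_def Gset_def)
    ultimately show ?thesis by simp
  qed
qed

end

theorem lemmaA4:
  fixes X :: "'a set" and p :: "'a \<Rightarrow> 'a set \<Rightarrow> real"
    and Q :: "'a set \<Rightarrow> 'a \<Rightarrow> 'a \<Rightarrow> real" and M :: "'a set"
  assumes "finite X"
    and "Q_family X Q"
    and "stochastic_choice X p"
    and "\<And>i j. i \<in> X \<Longrightarrow> j \<in> X \<Longrightarrow> i \<noteq> j \<Longrightarrow> stationary p Q {i,j}"
    and "menu X M"
  shows "(stationary p Q M \<longleftrightarrow>
            (\<forall>m\<in>M. (\<Sum>g\<in>Gset p M. Dmat p M m g * gamma Q M g) = 0))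
       \<and> (stationary p Q M \<longleftrightarrow>
            (\<forall>j\<in>M. (\<Sum>i\<in>{i. (j,i) \<in> Gset p M}. delta p M j i * Q M j i / p i {i,j})
                   - (\<Sum>i\<in>{i. (i,j) \<in> Gset p M}. delta p M i j * Q M i j / p j {i,j}) = 0))"
proof -
  have fin: "finite M" using assms(1,5) finite_subset unfolding menu_def by blast
  define net where
    "net k = (\<Sum>j\<in>M. edge_weight p Q M k j) - (\<Sum>i\<in>M. edge_weight p Q M i k)" for k
  have "(\<Sum>j\<in>M. flow p Q M k j) = net k" if "k \<in> M" for k
    using flow_eq_edge_weights[OF assms(2-5) that] by (simp add: net_def sum_subtractf)
  then have "stationary p Q M \<longleftrightarrow> (\<forall>k\<in>M. net k = 0)"
    using stationary_iff_flow_sums[OF fin] Q_rows[OF assms(2-5)] by simp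
  moreover have "(\<Sum>g\<in>Gset p M. Dmat p M m g * gamma Q M g) = net m" if "m \<in> M" for m
    using edge_weight_sum_eq_Dmat_gamma[OF fin that] by (simp add: net_def)
  moreover have "(\<Sum>i\<in>{i. (j,i) \<in> Gset p M}. delta p M j i * Q M j i / p i {i,j})
      - (\<Sum>i\<in>{i. (i,j) \<in> Gset p M}. delta p M i j * Q M i j / p j {i,j}) = net j"
    if "j \<in> M" for j
    using edge_weight_sums_eq_G_sums[OF fin that] by (simp add: net_def)
  ultimately show ?thesis by simp
qed

end
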